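(* Consider the two-sample Poisson testing problem $H_0$ vs. $H_1$ described in the context, with fixed $\beta\in(1/2,1)$ and $r>0$, under the high-counts condition $\min_{1\le i\le N}nP_i/\log N\to\infty$. Let $\rho^{\mathsf{Bonf}}_{\mathsf{high}}(\beta)=2(1-\sqrt{1-\beta})^2$. If $r>\rho^{\mathsf{Bonf}}_{\mathsf{high}}(\beta)$, then the min-P test is asymptotically powerful: there exist thresholds $t_N$ such that $\Pr_{H_0}(\pi_{(1)}\le t_N)+\Pr_{H_1}(\pi_{(1)}>t_N)\to0$, where $\pi_{(1)}=\min_{1\le i\le N}\pi_i$.
   Context: Asymptotic setting: $N\to\infty$ and $n=n(N)\to\infty$. For each $N$, $P=(P_1,\dots,P_N)$ is a vector with $P_i>0$ and $\sum_i P_i=1$. Fix $\beta$ and $r>0$, set $\epsilon_N=N^{-\beta}$ and $\mu=\mu_{N,n}=r\log(N)/(2n)$, and define $Q_i^\pm\ge0$ by $\sqrt{Q_i^\pm}=\max\{\sqrt{P_i}\pm\sqrt{\mu},0\}$. The data are $X_1,\dots,X_N,Y_1,\dots,Y_N$, all mutually independent. Under $H_0$: $X_i\sim\mathrm{Pois}(nP_i)$ and $Y_i\sim\mathrm{Pois}(nP_i)$. Under $H_1$: $X_i\sim\mathrm{Pois}(nP_i)$ and $Y_i\sim(1-\epsilon_N)\mathrm{Pois}(nP_i)+\frac{\epsilon_N}{2}\mathrm{Pois}(nQ_i^+)+\frac{\epsilon_N}{2}\mathrm{Pois}(nQ_i^-)$ (a mixture; $\mathrm{Pois}(0)$ is the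 point mass at $0$). Binomial allocation P-values: for nonnegative integers $x,y$ put $m=x+y$, let $B\sim\mathrm{Bin}(m,1/2)$ and $\pi(x,y)=\Pr(|B-m/2|\ge|x-m/2|)$ (two-sided exact binomial test). Set $\pi_i=\pi(X_i,Y_i)$. *)

theory Defs
  imports "HOL-Probability.Probability"
begin

definition pois :: "real \<Rightarrow> nat pmf" where
  "pois lam = (if lam = 0 then return_pmf 0 else poisson_pmf lam)"

definition binom_pval :: "nat \<Rightarrow> nat \<Rightarrow> real" where
  "binom_pval x y = measure_pmf.prob (binomial_pmf (x + y) (1/2))
     {k. \<bar>real k - real (x + y) / 2\<bar> \<ge> \<bar>real x - real (x + y) / 2\<bar>}"

definition eps_N :: "real \<Rightarrow> nat \<Rightarrow> real" where
  "eps_N \<beta> N = real N powr (- \<beta>)"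

definition mu_N :: "real \<Rightarrow> real \<Rightarrow> nat \<Rightarrow> real" where
  "mu_N r n N = r * ln (real N) / (2 * n)"

definition Qplus :: "real \<Rightarrow> real \<Rightarrow> real" where
  "Qplus p mu = (max (sqrt p + sqrt mu) 0)\<^sup>2"

definition Qminus :: "real \<Rightarrow> real \<Rightarrow> real" where
  "Qminus p mu = (max (sqrt p - sqrt mu) 0)\<^sup>2"

definition Y_alt :: "real \<Rightarrow> real \<Rightarrow> real \<Rightarrow> real \<Rightarrow> nat pmf" where
  "Y_alt eps n p mu =
     bind_pmf (bernoulli_pmf eps) (\<lambda>b. if b
        then bind_pmf (bernoulli_pmf (1/2))
               (\<lambda>c. if c then pois (n * Qplus p mu) else pois (n * Qminus p mu))
        else pois (n * p))"

text \<open>Joint law of ((X_i,Y_i))_{i<N} (indices 0..N-1), mutually independent.\<close>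
definition H0_law :: "nat \<Rightarrow> real \<Rightarrow> (nat \<Rightarrow> real) \<Rightarrow> (nat \<Rightarrow> nat \<times> nat) pmf" where
  "H0_law N n P = Pi_pmf {..<N} (0, 0) (\<lambda>i. pair_pmf (pois (n * P i)) (pois (n * P i)))"

definition H1_law :: "real \<Rightarrow> real \<Rightarrow> nat \<Rightarrow> real \<Rightarrow> (nat \<Rightarrow> real) \<Rightarrow> (nat \<Rightarrow> nat \<times> nat) pmf" where
  "H1_law \<beta> r N n P = Pi_pmf {..<N} (0, 0)
     (\<lambda>i. pair_pmf (pois (n * P i)) (Y_alt (eps_N \<beta> N) n (P i) (mu_N r n N)))"

definition min_pval :: "nat \<Rightarrow> (nat \<Rightarrow> nat \<times> nat) \<Rightarrow> real" where
  "min_pval N \<omega> = Min ((\<lambda>i. binom_pval (fst (\<omega> i)) (snd (\<omega> i))) ` {..<N})"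

end

theory Submission
  imports Defs "HOL-Real_Asymp.Real_Asymp"
begin

(*
  Under H0 the pair (X_i, Y_i) is a Poisson(2 n P_i) total split by a fair coin, so every binomial
  allocation P-value is super-uniform, and a union bound gives P(min_i pi_i <= N^-(1+d)) <= N^-d.

  Under H1, put L = log N, lambda = n P_i and s = sqrt(r/2), so that a shifted coordinate has
  Y-mean (sqrt lambda + s sqrt L)^2.  Since lambda / L -> infinity, lower bounds on Poisson tails
  (from Stirling's formula) show that X lies w sqrt L standard deviations below its mean, and Y as
  many above its own, each with probability at least N^(-w^2/2 + o(1)).  On that event Hoeffding's
  inequality puts the P-value below N^-(1+d) as soon as s + w > 1 + d.  So each coordinate detects
  with probability at least eps_N N^(-w^2 + o(1)), independently, and the test misses with
  probability at most exp(-N^(1 - beta - w^2 + o(1))).  Constants d, w > 0 with s + w > 1 + d and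
  w^2 < 1 - beta exist exactly when r > 2 (1 - sqrt(1 - beta))^2.
*)

section \<open>Lower bounds on Poisson probabilities\<close>

lemma ln_one_plus_ge_frac:
  fixes t :: real
  assumes "0 \<le> t"
  shows "2 * t / (2 + t) \<le> ln (1 + t)"
proof -
  let ?f = "\<lambda>s::real. ln (1 + s) - 2 * s / (2 + s)"
  have "?f 0 \<le> ?f t"
  proof (rule DERIV_nonneg_imp_nondecreasing[OF assms])
    fix x :: real assume x: "0 \<le> x" "x \<le> t"
    have "(?f has_real_derivative (1 / (1 + x) - 4 / (2 + x)^2)) (at x)"
      using x by (auto intro!: derivative_eq_intros simp: power2_eq_square)
    moreover have "4 / (2 + x)^2 \<le> 1 / (1 + x)"
      using x by (simp add: divide_simps power2_eq_square algebra_simps)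
    ultimately show "\<exists>y. (?f has_real_derivative y) (at x) \<and> 0 \<le> y" by auto
  qed
  then show ?thesis by simp
qed

lemma ln_le_half_diff_inverse:
  fixes x :: real
  assumes "1 \<le> x"
  shows "ln x \<le> (x - 1 / x) / 2"
proof -
  let ?f = "\<lambda>s::real. (s - 1 / s) / 2 - ln s"
  have "?f 1 \<le> ?f x"
  proof (rule DERIV_nonneg_imp_nondecreasing[OF assms])
    fix y :: real assume y: "1 \<le> y" "y \<le> x"
    have "(?f has_real_derivative ((y - 1)^2 / (2 * y^2))) (at y)"
      using y by (auto intro!: derivative_eq_intros simp: power2_eq_square field_simps)
    then show "\<exists>d. (?f has_real_derivative d) (at y) \<and> 0 \<le> d" using y by auto
  qed
  then show ?thesis by simp
qed

lemma ln_ge_quadratic: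
  fixes x :: real
  assumes "1 \<le> x"
  shows "(x - 1) - (x - 1)^2 / 2 \<le> ln x"
proof -
  let ?f = "\<lambda>s::real. ln s - (s - 1) + (s - 1)^2 / 2"
  have "?f 1 \<le> ?f x"
  proof (rule DERIV_nonneg_imp_nondecreasing[OF assms])
    fix y :: real assume y: "1 \<le> y" "y \<le> x"
    have "(?f has_real_derivative ((y - 1)^2 / y)) (at y)"
      using y by (auto intro!: derivative_eq_intros simp: power2_eq_square field_simps)
    then show "\<exists>d. (?f has_real_derivative d) (at y) \<and> 0 \<le> d" using y by auto
  qed
  then show ?thesis by simp
qed

lemma ln_fact_le:
  assumes "1 \<le> k"
  shows "ln (fact k) \<le> 1 + ln (real k) / 2 + real k * ln (real k) - real k"
  using assms
proof (induction k rule: nat_induct_at_least)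
  case base
  then show ?case by simp
next
  case (Suc k)
  define x where "x = real k"
  have x1: "1 \<le> x" using Suc.hyps by (simp add: x_def)
  have "2 / (2 * x + 1) \<le> ln (x + 1) - ln x"
  proof -
    have "2 * (1 / x) / (2 + 1 / x) \<le> ln (1 + 1 / x)"
      using x1 by (intro ln_one_plus_ge_frac) simp
    moreover have "1 + 1 / x = (x + 1) / x" using x1 by (simp add: field_simps)
    ultimately show ?thesis using x1 by (simp add: ln_div field_simps)
  qed
  then have step: "1 \<le> (x + 1 / 2) * (ln (x + 1) - ln x)"
    using x1 by (simp add: field_simps)
  have "ln (fact (Suc k)) = ln (x + 1) + ln (fact k)"
    by (simp add: x_def ln_mult add.commute del: of_nat_Suc)
  also have "\<dots> \<le> ln (x + 1) + (1 + ln x / 2 + x * ln x - x)"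
    using Suc.IH by (simp add: x_def)
  also have "\<dots> \<le> 1 + ln (x + 1) / 2 + (x + 1) * ln (x + 1) - (x + 1)"
    using step by (simp add: algebra_simps)
  finally show ?case by (simp add: x_def add.commute)
qed

lemma poisson_pmf_ge_stirling:
  assumes "0 < lam" "1 \<le> k"
  shows "exp (real k * ln lam - 1 - ln (real k) / 2 - real k * ln (real k) + real k - lam)
           \<le> pmf (poisson_pmf lam) k"
proof -
  have "pmf (poisson_pmf lam) k = exp (real k * ln lam) / exp (ln (fact k)) * exp (- lam)"
    using assms(1) by (simp add: exp_of_nat_mult)
  also have "\<dots> = exp (real k * ln lam - ln (fact k) - lam)"
    by (simp add: exp_diff exp_minus divide_inverse)
  finally show ?thesis using ln_fact_le[OF assms(2)] by simp
qed

lemma exp_minus_div_sqrt: "0 < k \<Longrightarrow> exp (- x) / (exp 1 * sqrt k) = exp (- x - 1 - ln k / 2)"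
  by (simp add: exp_diff exp_add powr_half_sqrt[symmetric] powr_def)

lemma poisson_pmf_ge_above:
  assumes "0 < lam" "lam \<le> real k"
  shows "exp (- ((real k - lam)^2 / (2 * lam))) / (exp 1 * sqrt (real k)) \<le> pmf (poisson_pmf lam) k"
proof -
  define K where "K = real k"
  have K1: "1 \<le> K" "1 \<le> k" using assms by (auto simp: K_def)
  have "ln (K / lam) \<le> (K / lam - 1 / (K / lam)) / 2"
    using assms by (intro ln_le_half_diff_inverse) (simp add: K_def)
  then have "K * ln (K / lam) \<le> K * ((K / lam - lam / K) / 2)"
    using K1 by (intro mult_left_mono) auto
  also have "\<dots> = (K - lam)^2 / (2 * lam) + K - lam"
    using assms K1 by (simp add: field_simps power2_eq_square)
  finally have "- ((K - lam)^2 / (2 * lam)) - 1 - ln K / 2 \<le> K * ln lam - 1 - ln K / 2 - K * ln K + K - lam"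
    using assms K1 by (simp add: ln_div algebra_simps)
  then have "exp (- ((K - lam)^2 / (2 * lam))) / (exp 1 * sqrt K)
      \<le> exp (K * ln lam - 1 - ln K / 2 - K * ln K + K - lam)"
    using K1 by (simp add: exp_minus_div_sqrt)
  then show ?thesis using poisson_pmf_ge_stirling[OF assms(1) K1(2)] by (simp add: K_def)
qed

lemma poisson_pmf_ge_below:
  assumes "1 \<le> k" "real k \<le> lam"
  shows "exp (- ((lam - real k)^2 / (2 * real k))) / (exp 1 * sqrt (real k)) \<le> pmf (poisson_pmf lam) k"
proof -
  define K where "K = real k"
  have K1: "1 \<le> K" "K \<le> lam" using assms by (auto simp: K_def)
  have "(lam / K - 1) - (lam / K - 1)^2 / 2 \<le> ln (lam / K)"
    using K1 by (intro ln_ge_quadratic) simp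
  then have "K * ((lam / K - 1) - (lam / K - 1)^2 / 2) \<le> K * ln (lam / K)"
    using K1 by (intro mult_left_mono) auto
  moreover have "K * ((lam / K - 1) - (lam / K - 1)^2 / 2) = (lam - K) - (lam - K)^2 / (2 * K)"
    using K1 by (simp add: field_simps power2_eq_square)
  ultimately have "- ((lam - K)^2 / (2 * K)) - 1 - ln K / 2 \<le> K * ln lam - 1 - ln K / 2 - K * ln K + K - lam"
    using K1 by (simp add: ln_div algebra_simps)
  then have "exp (- ((lam - K)^2 / (2 * K))) / (exp 1 * sqrt K)
      \<le> exp (K * ln lam - 1 - ln K / 2 - K * ln K + K - lam)"
    using K1 by (simp add: exp_minus_div_sqrt)
  then show ?thesis using poisson_pmf_ge_stirling[of lam k] assms K1 by (simp add: K_def)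
qed

lemma card_mul_le_measure_pmf:
  assumes "finite W" "W \<subseteq> S" "\<And>k. k \<in> W \<Longrightarrow> v \<le> pmf M k"
  shows "real (card W) * v \<le> measure_pmf.prob M S"
proof -
  have "real (card W) * v \<le> sum (pmf M) W" using assms(3) sum_mono[of W "\<lambda>_. v"] by simp
  also have "\<dots> = measure_pmf.prob M W" using assms(1) by (simp add: measure_measure_pmf_finite)
  also have "\<dots> \<le> measure_pmf.prob M S" using assms(2) by (intro measure_pmf.finite_measure_mono) auto
  finally show ?thesis .
qed

lemma poisson_pmf_ge_window_above:
  assumes lam1: "1 \<le> lam" and c: "0 \<le> c" "c \<le> sqrt lam"
    and k: "lam + c * sqrt lam \<le> real k" "real k \<le> lam + (c + 2) * sqrt lam"
  shows "exp (- ((c + 2)^2 / 2)) / (exp 1 * (2 * sqrt lam)) \<le> pmf (poisson_pmf lam) k"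
proof -
  define a where "a = sqrt lam"
  have a1: "1 \<le> a" and aa: "a * a = lam" using lam1 by (auto simp: a_def)
  have ca: "0 \<le> c * a" using c a1 by simp
  have k': "lam + c * a \<le> real k" "real k \<le> lam + (c + 2) * a" using k by (simp_all add: a_def)
  then have "(real k - lam)^2 \<le> ((c + 2) * a)^2"
    using ca by (intro power_mono) auto
  also have "((c + 2) * a)^2 = (c + 2)^2 * lam" unfolding aa[symmetric] by (simp add: power2_eq_square)
  finally have "(real k - lam)^2 / (2 * lam) \<le> (c + 2)^2 / 2"
    using lam1 by (simp add: divide_simps)
  moreover have "sqrt (real k) \<le> 2 * a"
  proof -
    have "c * a \<le> a * a" using c a1 by (intro mult_right_mono) (auto simp: a_def)
    moreover have "2 * a \<le> 2 * (a * a)" using a1 by simp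
    ultimately have "real k \<le> (2 * a)^2" using k' aa by (simp add: power2_eq_square algebra_simps)
    then have "sqrt (real k) \<le> sqrt ((2 * a)^2)" by (rule real_sqrt_le_mono)
    also have "\<dots> = 2 * a" using a1 by (simp only: real_sqrt_abs)
    finally show ?thesis .
  qed
  moreover have "1 \<le> real k" using k' ca lam1 by linarith
  ultimately have "exp (- ((c + 2)^2 / 2)) / (exp 1 * (2 * a))
      \<le> exp (- ((real k - lam)^2 / (2 * lam))) / (exp 1 * sqrt (real k))"
    by (intro frac_le) auto
  also have "\<dots> \<le> pmf (poisson_pmf lam) k"
    using k' ca lam1 by (intro poisson_pmf_ge_above) auto
  finally show ?thesis by (simp add: a_def)
qed

lemma poisson_pmf_ge_window_below:
  assumes "0 < lam" and c: "0 \<le> c" and den: "1 \<le> lam - (c + 2) * sqrt lam"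
    and k: "lam - (c + 2) * sqrt lam \<le> real k" "real k \<le> lam - c * sqrt lam"
  shows "exp (- ((c + 2)^2 / (2 * (1 - (c + 2) / sqrt lam)))) / (exp 1 * sqrt lam) \<le> pmf (poisson_pmf lam) k"
proof -
  define a where "a = sqrt lam"
  have a: "0 < a" "a * a = lam" using \<open>0 < lam\<close> by (simp_all add: a_def)
  have ca: "0 \<le> c * a" using c a by simp
  have "(lam - real k)^2 \<le> ((c + 2) * a)^2"
    using k ca by (intro power_mono) (auto simp: a_def algebra_simps)
  also have "\<dots> = (c + 2)^2 * lam" unfolding a(2)[symmetric] by (simp add: power2_eq_square)
  finally have "(lam - real k)^2 / (2 * real k) \<le> (c + 2)^2 * lam / (2 * (lam - (c + 2) * a))"
    using k den \<open>0 < lam\<close> by (intro frac_le) (auto simp: a_def)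
  also have "lam - (c + 2) * a = lam * (1 - (c + 2) / a)"
    using a unfolding a(2)[symmetric] by (simp add: field_simps)
  also have "(c + 2)^2 * lam / (2 * (lam * (1 - (c + 2) / a))) = (c + 2)^2 / (2 * (1 - (c + 2) / a))"
    using \<open>0 < lam\<close> by simp
  finally have "exp (- ((c + 2)^2 / (2 * (1 - (c + 2) / a)))) / (exp 1 * a)
      \<le> exp (- ((lam - real k)^2 / (2 * real k))) / (exp 1 * sqrt (real k))"
    using k den ca by (intro frac_le) (auto simp: a_def real_sqrt_le_mono)
  also have "\<dots> \<le> pmf (poisson_pmf lam) k"
    using k den ca by (intro poisson_pmf_ge_below) (auto simp: a_def)
  finally show ?thesis by (simp add: a_def)
qed

(* In both tail bounds the window of about sqrt lam integers next to the threshold cancels the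
   factor 1 / sqrt lam of the pointwise bound. *)
lemma poisson_upper_tail_ge:
  assumes lam1: "1 \<le> lam" and c: "0 \<le> c" "c \<le> sqrt lam"
  shows "exp (- ((c + 2)^2 / 2)) / (2 * exp 1)
           \<le> measure_pmf.prob (poisson_pmf lam) {k. lam + c * sqrt lam \<le> real k}"
proof -
  define a where "a = sqrt lam"
  define K where "K = nat \<lceil>lam + c * a\<rceil>"
  define J where "J = nat \<lfloor>a\<rfloor>"
  have a1: "1 \<le> a" using lam1 by (simp add: a_def)
  have "real K = of_int \<lceil>lam + c * a\<rceil>" "real J = of_int \<lfloor>a\<rfloor>"
    unfolding K_def J_def using lam1 c a1 by (simp_all add: of_nat_nat)
  then have K: "lam + c * a \<le> real K" "real K < lam + c * a + 1"
    and J: "real J \<le> a" "a < real J + 1"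
    by linarith+
  have "exp (- ((c + 2)^2 / 2)) / (2 * exp 1) = a * (exp (- ((c + 2)^2 / 2)) / (exp 1 * (2 * a)))"
    using a1 by simp
  also have "\<dots> \<le> real (card {K..K+J}) * (exp (- ((c + 2)^2 / 2)) / (exp 1 * (2 * a)))"
    using J by (intro mult_right_mono) auto
  also have "\<dots> \<le> measure_pmf.prob (poisson_pmf lam) {k. lam + c * sqrt lam \<le> real k}"
  proof (rule card_mul_le_measure_pmf)
    fix k assume "k \<in> {K..K+J}"
    then have "lam + c * a \<le> real k" "real k \<le> lam + (c + 2) * a"
      using K J a1 by (auto simp: algebra_simps)
    then show "exp (- ((c + 2)^2 / 2)) / (exp 1 * (2 * a)) \<le> pmf (poisson_pmf lam) k"
      using poisson_pmf_ge_window_above[OF lam1 c] by (simp add: a_def)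
  qed (use K in \<open>auto simp: a_def\<close>)
  finally show ?thesis .
qed

lemma poisson_lower_tail_ge:
  assumes c: "0 \<le> c" and c_le: "c + 3 \<le> sqrt lam / 2"
  shows "exp (- ((c + 2)^2 / (2 * (1 - (c + 2) / sqrt lam)))) / exp 1
           \<le> measure_pmf.prob (poisson_pmf lam) {k. real k \<le> lam - c * sqrt lam}"
proof -
  define a where "a = sqrt lam"
  define K where "K = nat \<lfloor>lam - c * a\<rfloor>"
  define J where "J = nat \<lfloor>a\<rfloor>"
  define v where "v = exp (- ((c + 2)^2 / (2 * (1 - (c + 2) / a)))) / (exp 1 * a)"
  have a6: "6 \<le> a" using c c_le by (simp add: a_def)
  then have "0 < a" by simp
  then have "0 < lam" by (simp add: a_def)
  then have aa: "a * a = lam" by (simp add: a_def)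
  have "c \<le> a / 2 - 3" using c_le by (simp add: a_def)
  then have "c * a \<le> (a / 2 - 3) * a" using a6 by (intro mult_right_mono) auto
  then have den: "a \<le> lam - (c + 2) * a" using a6 aa \<open>0 < lam\<close> by (simp add: algebra_simps)
  have "real K = of_int \<lfloor>lam - c * a\<rfloor>" "real J = of_int \<lfloor>a\<rfloor>"
    unfolding K_def J_def using den a6 by (simp_all add: algebra_simps of_nat_nat)
  then have K: "real K \<le> lam - c * a" "lam - c * a - 1 < real K"
    and J: "real J \<le> a" "a < real J + 1"
    by linarith+
  have "real J \<le> real K" using K J den a6 by (simp add: algebra_simps)
  then have JK: "J \<le> K" by simp
  have "exp (- ((c + 2)^2 / (2 * (1 - (c + 2) / a)))) / exp 1 = a * v" using a6 by (simp add: v_def)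
  also have "\<dots> \<le> real (card {K - J..K}) * v" using J JK by (intro mult_right_mono) (auto simp: v_def)
  also have "\<dots> \<le> measure_pmf.prob (poisson_pmf lam) {k. real k \<le> lam - c * a}"
  proof (rule card_mul_le_measure_pmf)
    fix k assume "k \<in> {K - J..K}"
    then have "real (K - J) \<le> real k" "k \<le> K" by simp_all
    then have "lam - (c + 2) * a \<le> real k" "real k \<le> lam - c * a"
      using JK K J a6 by (auto simp: of_nat_diff algebra_simps)
    then show "v \<le> pmf (poisson_pmf lam) k"
      using poisson_pmf_ge_window_below[OF \<open>0 < lam\<close> c] den a6 by (simp add: v_def a_def)
  qed (use K in auto)
  finally show ?thesis by (simp add: a_def)
qed

section \<open>Binomial allocation P-values\<close>

lemma binom_pval_le_hoeffding:
  assumes "x < y"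
  shows "binom_pval x y \<le> 2 * exp (- ((real y - real x)^2 / (2 * real (x + y))))"
proof -
  define m where "m = x + y"
  define e where "e = \<bar>real x - real m / 2\<bar>"
  have m0: "0 < m" using assms by (simp add: m_def)
  have "binomial_distribution (1/2::real)" by unfold_locales auto
  then have "measure_pmf.prob (binomial_pmf m (1/2)) {k. e \<le> \<bar>real k - real m * (1/2)\<bar>}
      \<le> 2 * exp (- 2 * e^2 / m)"
    using m0 by (intro binomial_distribution.prob_abs_ge) (auto simp: e_def)
  moreover have "e^2 = ((real y - real x) / 2)^2"
    unfolding e_def m_def by (simp add: power2_abs field_simps power2_eq_square)
  ultimately show ?thesis
    unfolding binom_pval_def m_def[symmetric] e_def[symmetric] using m0
    by (simp add: power_divide m_def mult.commute)
qed

lemma sq_diff_div_sum_mono: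
  fixes x y b A :: real
  assumes "0 \<le> x" "x \<le> b" "b < A" "A \<le> y"
  shows "(A - b)^2 / (A + b) \<le> (y - x)^2 / (y + x)"
proof -
  define u where "u = y - x"
  define v where "v = A - b"
  have uv: "0 < v" "v \<le> u" and b0: "0 \<le> b" using assms by (auto simp: u_def v_def)
  have "v^2 * (u + 2 * x) \<le> v^2 * (u + 2 * b)" using assms by (intro mult_left_mono) auto
  also have "\<dots> \<le> u^2 * (v + 2 * b)"
  proof -
    have "v * v * u \<le> u * u * v" using uv by (simp add: mult_mono mult.commute mult.left_commute)
    moreover have "v * v \<le> u * u" using uv by (intro mult_mono) auto
    ultimately show ?thesis using b0 by (simp add: power2_eq_square algebra_simps mult_left_mono add_mono)
  qed
  finally have "v^2 / (v + 2 * b) \<le> u^2 / (u + 2 * x)"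
    using uv b0 assms by (simp add: divide_simps mult.commute)
  then show ?thesis by (simp add: u_def v_def add.commute)
qed

lemma binom_pval_le_if_separated:
  assumes x: "real x \<le> b" and y: "A \<le> real y" and bA: "b < A"
    and gap: "c \<le> (A - b)^2 / (2 * (A + b))"
  shows "binom_pval x y \<le> 2 * exp (- c)"
proof -
  have "(A - b)^2 / (A + b) \<le> (real y - real x)^2 / (real y + real x)"
    using x y bA by (intro sq_diff_div_sum_mono) auto
  then have "(A - b)^2 / (A + b) / 2 \<le> (real y - real x)^2 / (real y + real x) / 2"
    by (rule divide_right_mono) simp
  then have "c \<le> (real y - real x)^2 / (2 * real (x + y))"
    using gap by (simp add: add.commute mult.commute)
  moreover have "x < y" using x y bA by linarith
  ultimately show ?thesis using binom_pval_le_hoeffding[of x y] by (smt (verit) exp_mono)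
qed

lemma binom_pval_superuniform:
  assumes t0: "0 \<le> t"
  shows "measure_pmf.prob (binomial_pmf m (1/2)) {k. binom_pval k (m - k) \<le> t} \<le> t"
proof -
  define B where "B = binomial_pmf m (1/2)"
  define d where "d = (\<lambda>k::nat. \<bar>real k - real m / 2\<bar>)"
  define S where "S = {k. k \<le> m \<and> binom_pval k (m - k) \<le> t}"
  have pval: "binom_pval k (m - k) = measure_pmf.prob B {j. d k \<le> d j}" if "k \<le> m" for k
    using that by (simp add: binom_pval_def B_def d_def)
  have "measure_pmf.prob B {k. binom_pval k (m - k) \<le> t} \<le> measure_pmf.prob B S"
    by (intro measure_pmf.finite_measure_mono_AE) (auto simp: AE_measure_pmf_iff B_def S_def)
  also have "\<dots> \<le> t"
  proof (cases "S = {}")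
    case False
    \<comment> \<open>S lies in the two-sided tail of its point k0 closest to m/2, whose mass is the P-value of k0.\<close>
    have "finite S" by (simp add: S_def)
    then have "Min (d ` S) \<in> d ` S" using False by simp
    then obtain k0 where k0: "k0 \<in> S" "d k0 = Min (d ` S)" by auto
    with \<open>finite S\<close> have k0_min: "d k0 \<le> d k" if "k \<in> S" for k using that by simp
    have "measure_pmf.prob B S \<le> measure_pmf.prob B {j. d k0 \<le> d j}"
      using k0_min by (intro measure_pmf.finite_measure_mono) auto
    also have "\<dots> \<le> t" using k0(1) pval[of k0] by (simp add: S_def)
    finally show ?thesis .
  qed (use t0 in simp)
  finally show ?thesis by (simp add: B_def)
qed

lemma pmf_map_binomial_split:
  "pmf (map_pmf (\<lambda>k. (k, m - k)) (binomial_pmf m (1/2))) (x, y) =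
     (if m = x + y then pmf (binomial_pmf m (1/2)) x else 0)"
proof -
  have "pmf (map_pmf (\<lambda>k. (k, m - k)) (binomial_pmf m (1/2))) (x, y) =
        measure_pmf.prob (binomial_pmf m (1/2)) ((\<lambda>k. (k, m - k)) -` {(x, y)})"
    by (simp add: pmf_map)
  moreover have "(\<lambda>k. (k, m - k)) -` {(x, y)} = {x}" if "m = x + y"
    using that by auto
  moreover have "set_pmf (binomial_pmf m (1/2)) \<inter> ((\<lambda>k. (k, m - k)) -` {(x, y)}) = {}" if "m \<noteq> x + y"
    using that by auto
  ultimately show ?thesis by (auto simp: measure_pmf_single measure_pmf_zero_iff)
qed

lemma pair_poisson_eq_bind_binomial:
  assumes lam0: "0 < lam"
  shows "pair_pmf (poisson_pmf lam) (poisson_pmf lam) =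
         bind_pmf (poisson_pmf (2 * lam)) (\<lambda>m. map_pmf (\<lambda>k. (k, m - k)) (binomial_pmf m (1/2)))"
proof (rule pmf_eqI)
  fix z :: "nat \<times> nat"
  obtain x y where z: "z = (x, y)" by (cases z)
  have "pmf (bind_pmf (poisson_pmf (2 * lam)) (\<lambda>m. map_pmf (\<lambda>k. (k, m - k)) (binomial_pmf m (1/2)))) z
      = (\<integral>m. pmf (map_pmf (\<lambda>k. (k, m - k)) (binomial_pmf m (1/2))) (x, y) \<partial>measure_pmf (poisson_pmf (2 * lam)))"
    by (simp add: pmf_bind z)
  also have "\<dots> = (\<integral>m. (if m = x + y then pmf (binomial_pmf m (1/2)) x else 0) \<partial>measure_pmf (poisson_pmf (2 * lam)))"
    by (simp add: pmf_map_binomial_split)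
  also have "\<dots> = pmf (binomial_pmf (x + y) (1/2)) x * pmf (poisson_pmf (2 * lam)) (x + y)"
    by (subst integral_measure_pmf_real[where A = "{x + y}"]) (auto split: if_splits)
  also have "\<dots> = (lam ^ x / fact x * exp (- lam)) * (lam ^ y / fact y * exp (- lam))"
  proof -
    define F Fx Fy where "F = (fact (x + y) :: real)" and "Fx = (fact x :: real)" and "Fy = (fact y :: real)"
    have F0: "0 < F" "0 < Fx" "0 < Fy" by (auto simp: F_def Fx_def Fy_def)
    have b: "pmf (binomial_pmf (x + y) (1/2)) x = F / (Fx * Fy) * (1/2) ^ (x + y)"
      using binomial_fact[of x "x + y", where 'a = real] by (simp add: F_def Fx_def Fy_def power_add)
    have p: "pmf (poisson_pmf (2 * lam)) (x + y) = (2 * lam) ^ (x + y) / F * exp (- (2 * lam))"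
      using lam0 by (simp add: F_def)
    have h: "(1/2) ^ (x + y) * (2 * lam) ^ (x + y) = lam ^ x * lam ^ y"
      unfolding power_mult_distrib[symmetric] power_add[symmetric] by simp
    have e: "exp (- (2 * lam)) = exp (- lam) * exp (- lam)"
      by (simp add: exp_add[symmetric])
    have ar: "F / (Fx * Fy) * g * (q / F * r) = (g * q) / (Fx * Fy) * r" for g q r :: real
      using F0 by (simp add: field_simps)
    have "pmf (binomial_pmf (x + y) (1/2)) x * pmf (poisson_pmf (2 * lam)) (x + y)
        = (lam ^ x * lam ^ y) / (Fx * Fy) * (exp (- lam) * exp (- lam))"
      unfolding b p ar h e ..
    also have "\<dots> = (lam ^ x / Fx * exp (- lam)) * (lam ^ y / Fy * exp (- lam))"
      using F0 by (simp add: field_simps)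
    finally show ?thesis by (simp add: Fx_def Fy_def)
  qed
  also have "\<dots> = pmf (pair_pmf (poisson_pmf lam) (poisson_pmf lam)) z"
    using lam0 by (simp add: pmf_pair z)
  finally show "pmf (pair_pmf (poisson_pmf lam) (poisson_pmf lam)) z = pmf (bind_pmf (poisson_pmf (2 * lam))
      (\<lambda>m. map_pmf (\<lambda>k. (k, m - k)) (binomial_pmf m (1/2)))) z" by (rule sym)
qed

lemma measure_bind_pmf:
  "measure_pmf.prob (bind_pmf M f) A = (\<integral>x. measure_pmf.prob (f x) A \<partial>M)"
proof -
  have int: "integrable (measure_pmf M) (\<lambda>x. measure_pmf.prob (f x) A)"
    by (intro measure_pmf.integrable_const_bound[where B = 1]) auto
  have "ennreal (measure_pmf.prob (bind_pmf M f) A) = (\<integral>\<^sup>+x. ennreal (measure_pmf.prob (f x) A) \<partial>M)"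
    by (simp add: measure_pmf.emeasure_eq_measure[symmetric])
  also have "\<dots> = ennreal (\<integral>x. measure_pmf.prob (f x) A \<partial>M)"
    using int by (intro nn_integral_eq_integral) auto
  finally show ?thesis by (simp add: integral_nonneg_AE)
qed

lemma measure_bind_pmf_le:
  assumes "\<And>x. measure_pmf.prob (f x) A \<le> t"
  shows "measure_pmf.prob (bind_pmf M f) A \<le> t"
proof -
  have "(\<integral>x. measure_pmf.prob (f x) A \<partial>M) \<le> (\<integral>x. t \<partial>M)"
    using assms by (intro integral_mono[OF measure_pmf.integrable_const_bound[where B = 1]]) auto
  then show ?thesis by (simp add: measure_bind_pmf)
qed

lemma pair_poisson_binom_pval_le:
  assumes "0 < lam" "0 \<le> t"
  shows "measure_pmf.prob (pair_pmf (pois lam) (pois lam)) {z. binom_pval (fst z) (snd z) \<le> t} \<le> t"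
proof -
  have "pair_pmf (pois lam) (pois lam) =
      bind_pmf (poisson_pmf (2 * lam)) (\<lambda>m. map_pmf (\<lambda>k. (k, m - k)) (binomial_pmf m (1/2)))"
    using assms by (simp add: pois_def pair_poisson_eq_bind_binomial)
  then show ?thesis
    using binom_pval_superuniform[OF assms(2)] by (simp add: measure_bind_pmf_le vimage_def)
qed

section \<open>A single coordinate under the alternative\<close>

lemma measure_bind_bernoulli_pmf:
  assumes "0 \<le> p" "p \<le> 1"
  shows "measure_pmf.prob (bind_pmf (bernoulli_pmf p) F) A =
           p * measure_pmf.prob (F True) A + (1 - p) * measure_pmf.prob (F False) A"
  using assms by (simp add: measure_bind_pmf mult.commute)

lemma Y_alt_prob_ge:
  assumes "0 \<le> eps" "eps \<le> 1"
  shows "eps / 2 * measure_pmf.prob (pois (n * Qplus p mu)) S \<le> measure_pmf.prob (Y_alt eps n p mu) S"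
proof -
  have "measure_pmf.prob (Y_alt eps n p mu) S
      = eps / 2 * measure_pmf.prob (pois (n * Qplus p mu)) S
        + (eps / 2 * measure_pmf.prob (pois (n * Qminus p mu)) S + (1 - eps) * measure_pmf.prob (pois (n * p)) S)"
    unfolding Y_alt_def using assms
    by (simp add: measure_bind_bernoulli_pmf if_distrib[of "\<lambda>M. measure_pmf.prob M S"] algebra_simps cong: if_cong)
  moreover have "0 \<le> eps / 2 * measure_pmf.prob (pois (n * Qminus p mu)) S + (1 - eps) * measure_pmf.prob (pois (n * p)) S"
    using assms by simp
  ultimately show ?thesis by linarith
qed

lemma Y_alt_upper_tail_ge:
  assumes eps: "0 \<le> eps" "eps \<le> 1" and lam: "1 \<le> n * Qplus p mu" and c: "0 \<le> c" "c \<le> sqrt (n * Qplus p mu)"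
  shows "eps / 2 * (exp (- ((c + 2)^2 / 2)) / (2 * exp 1))
           \<le> measure_pmf.prob (Y_alt eps n p mu) {k. n * Qplus p mu + c * sqrt (n * Qplus p mu) \<le> real k}"
proof -
  have "exp (- ((c + 2)^2 / 2)) / (2 * exp 1)
      \<le> measure_pmf.prob (pois (n * Qplus p mu)) {k. n * Qplus p mu + c * sqrt (n * Qplus p mu) \<le> real k}"
    using poisson_upper_tail_ge[OF lam c] lam unfolding pois_def by (simp only: if_not_P)
  then show ?thesis using Y_alt_prob_ge[OF eps] eps
    by (meson divide_nonneg_pos mult_left_mono order_trans zero_less_numeral)
qed

lemma mult_Qplus_eq:
  assumes "0 \<le> n" "0 \<le> p" "0 \<le> mu"
  shows "n * Qplus p mu = (sqrt (n * p) + sqrt (n * mu))^2"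
proof -
  have "n * Qplus p mu = (sqrt n * (sqrt p + sqrt mu))^2"
    using assms by (simp add: Qplus_def max_absorb1 power_mult_distrib)
  also have "sqrt n * (sqrt p + sqrt mu) = sqrt (n * p) + sqrt (n * mu)"
    by (simp add: real_sqrt_mult distrib_left)
  finally show ?thesis .
qed

(* X <= b, Y >= A is the detection event: X at least w l standard deviations below the null mean
   a^2 and Y as many above the shifted mean (a + s l)^2, where l = sqrt(log N). *)
lemma shifted_rectangle_gap:
  fixes a l s w \<delta> \<kappa> :: real
  assumes a: "0 < a" and l: "0 < l" "l \<le> \<kappa> * a" and \<kappa>1: "\<kappa> \<le> 1"
    and s: "0 \<le> s" and w: "0 \<le> w" and \<delta>: "0 \<le> \<delta>" "1 + \<delta> \<le> s + w"
  defines "b \<equiv> a^2 - w * a * l" and "A \<equiv> (a + s * l)^2 + w * (a + s * l) * l"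
  shows "b < A" and "l^2 * (1 + \<delta>)^2 / (1 + \<kappa> * (s + s^2 + w * s)) \<le> (A - b)^2 / (2 * (A + b))"
proof -
  have \<kappa>0: "0 \<le> \<kappa>" using a l by (smt (verit) zero_less_mult_iff)
  have "2 * a * l * (1 + \<delta>) \<le> 2 * a * l * (s + w)"
    using \<delta> a l by (intro mult_left_mono) auto
  also have "\<dots> \<le> A - b"
    using a l s w by (simp add: A_def b_def power2_eq_square algebra_simps)
  finally have gap: "2 * a * l * (1 + \<delta>) \<le> A - b" .
  then show "b < A" using a l \<delta> by (smt (verit) mult_pos_pos)
  have ll: "l * l \<le> \<kappa> * (a * a)"
  proof -
    have "l * l \<le> (\<kappa> * a) * (\<kappa> * a)" using l by (intro mult_mono) auto
    also have "\<dots> \<le> \<kappa> * (a * a)" using \<kappa>0 \<kappa>1 by (simp add: mult_left_le_one_le algebra_simps)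
    finally show ?thesis .
  qed
  have sum_eq: "A + b = 2 * a^2 + 2 * s * (a * l) + (s^2 + w * s) * (l * l)"
    by (simp add: A_def b_def power2_eq_square algebra_simps)
  also have "\<dots> \<le> 2 * a^2 + 2 * s * (\<kappa> * (a * a)) + (s^2 + w * s) * (\<kappa> * (a * a))"
  proof -
    have "a * l \<le> \<kappa> * (a * a)" using l a by (simp add: mult_left_mono algebra_simps)
    then show ?thesis using ll s w by (intro add_mono mult_left_mono) auto
  qed
  also have "\<dots> \<le> 2 * a^2 * (1 + \<kappa> * (s + s^2 + w * s))"
  proof -
    have "0 \<le> (s^2 + w * s) * (\<kappa> * (a * a))" using \<kappa>0 s w by simp
    then show ?thesis by (simp add: power2_eq_square algebra_simps)
  qed
  finally have sum: "A + b \<le> 2 * a^2 * (1 + \<kappa> * (s + s^2 + w * s))" .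
  have "0 < A + b" unfolding sum_eq using a l s w by (intro add_pos_nonneg) auto
  have "l^2 * (1 + \<delta>)^2 / (1 + \<kappa> * (s + s^2 + w * s))
      = (4 * a^2) * (l^2 * (1 + \<delta>)^2) / ((4 * a^2) * (1 + \<kappa> * (s + s^2 + w * s)))"
    using a by simp
  also have "\<dots> = (2 * a * l * (1 + \<delta>))^2 / (2 * (2 * a^2 * (1 + \<kappa> * (s + s^2 + w * s))))"
    by (simp add: power_mult_distrib mult.assoc)
  also have "\<dots> \<le> (A - b)^2 / (2 * (A + b))"
    using gap sum \<open>0 < A + b\<close> a l \<delta> by (intro frac_le power_mono) auto
  finally show "l^2 * (1 + \<delta>)^2 / (1 + \<kappa> * (s + s^2 + w * s)) \<le> (A - b)^2 / (2 * (A + b))" .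
qed

lemma binom_pval_le_on_shifted_rectangle:
  fixes a l s w \<delta> \<kappa> :: real
  assumes a: "0 < a" and l: "0 < l" "l \<le> \<kappa> * a" and \<kappa>1: "\<kappa> \<le> 1"
    and s: "0 \<le> s" and w: "0 \<le> w" and \<delta>: "0 \<le> \<delta>" "1 + \<delta> \<le> s + w"
    and hoeff: "(1 + \<delta>) * l^2 + ln 2 \<le> l^2 * (1 + \<delta>)^2 / (1 + \<kappa> * (s + s^2 + w * s))"
    and xy: "real x \<le> a^2 - w * a * l" "(a + s * l)^2 + w * (a + s * l) * l \<le> real y"
  shows "binom_pval x y \<le> exp (- ((1 + \<delta>) * l^2))"
proof -
  have "binom_pval x y \<le> 2 * exp (- ((1 + \<delta>) * l^2 + ln 2))"
    using shifted_rectangle_gap[OF a l \<kappa>1 s w \<delta>] hoeff xy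
    by (intro binom_pval_le_if_separated) auto
  then show ?thesis by (simp add: exp_add exp_minus_inverse exp_diff)
qed

lemma poisson_lower_tail_ge_scaled:
  assumes l: "1 \<le> l" "l \<le> \<kappa> * sqrt lam" and \<kappa>: "0 \<le> \<kappa>" "(w + 3) * \<kappa> \<le> 1/2" and w: "0 \<le> w"
  shows "exp (- ((w * l + 2)^2 / (2 * (1 - (w + 2) * \<kappa>)))) / exp 1
           \<le> measure_pmf.prob (poisson_pmf lam) {k. real k \<le> lam - w * l * sqrt lam}"
proof -
  define a where "a = sqrt lam"
  have "0 < \<kappa> * a" using l by (simp add: a_def)
  then have a: "0 < a" using \<kappa> by (simp add: zero_less_mult_iff)
  have wl: "w * l + 3 \<le> (w + 3) * l" "w * l + 2 \<le> (w + 2) * l" using l w by (simp_all add: algebra_simps)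
  have "w * l + 3 \<le> (w + 3) * (\<kappa> * a)"
    using wl l w by (smt (verit) a_def mult_left_mono)
  also have "\<dots> \<le> 1/2 * a" using \<kappa> a by (simp add: mult.assoc[symmetric] mult_right_mono)
  finally have c3: "w * l + 3 \<le> a / 2" by simp
  have "(w + 2) * l \<le> (w + 2) * (\<kappa> * a)" using l w by (intro mult_left_mono) (auto simp: a_def)
  then have "(w * l + 2) / a \<le> (w + 2) * \<kappa>" using wl a by (simp add: divide_simps algebra_simps)
  moreover have "(w + 2) * \<kappa> \<le> 1/2" using \<kappa> mult_right_mono[of "w + 2" "w + 3" \<kappa>] by linarith
  ultimately have "(w * l + 2)^2 / (2 * (1 - (w * l + 2) / a)) \<le> (w * l + 2)^2 / (2 * (1 - (w + 2) * \<kappa>))"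
    by (intro frac_le) (auto simp del: times_divide_eq_right)
  then have "exp (- ((w * l + 2)^2 / (2 * (1 - (w + 2) * \<kappa>)))) / exp 1
      \<le> exp (- ((w * l + 2)^2 / (2 * (1 - (w * l + 2) / a)))) / exp 1"
    by (simp add: divide_right_mono)
  also have "\<dots> \<le> measure_pmf.prob (poisson_pmf lam) {k. real k \<le> lam - w * l * sqrt lam}"
    using poisson_lower_tail_ge[of "w * l" lam] c3 l w by (simp add: a_def)
  finally show ?thesis .
qed

lemma measure_pair_pmf_ge_rectangle:
  fixes M :: "'a::countable pmf" and M' :: "'b::countable pmf"
  assumes "A \<times> B \<subseteq> S"
  shows "measure_pmf.prob M A * measure_pmf.prob M' B \<le> measure_pmf.prob (pair_pmf M M') S"
proof -
  have "measure_pmf.prob M A * measure_pmf.prob M' B = measure_pmf.prob (pair_pmf M M') (A \<times> B)"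
    by (rule measure_pmf_prob_product[symmetric]) (simp_all add: countableI_type)
  also have "\<dots> \<le> measure_pmf.prob (pair_pmf M M') S"
    using assms by (intro measure_pmf.finite_measure_mono) auto
  finally show ?thesis .
qed

lemma alt_pair_binom_pval_prob_ge:
  fixes L \<kappa> w s \<delta> eps n p mu :: real
  assumes L: "1 \<le> L" "L \<le> \<kappa>^2 * (n * p)" and \<kappa>: "0 \<le> \<kappa>" "(w + 3) * \<kappa> \<le> 1/2"
    and w: "0 < w" and s: "0 \<le> s" and \<delta>: "0 \<le> \<delta>" "1 + \<delta> \<le> s + w"
    and hoeff: "(1 + \<delta>) * L + ln 2 \<le> L * (1 + \<delta>)^2 / (1 + \<kappa> * (s + s^2 + w * s))"
    and eps: "0 \<le> eps" "eps \<le> 1" and np: "0 < n" "0 < p" and mu: "0 \<le> mu" "n * mu = s^2 * L"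
  shows "eps / 4 * exp (- ((w * sqrt L + 2)^2 * (1 / (2 * (1 - (w + 2) * \<kappa>)) + 1 / 2) + 2))
      \<le> measure_pmf.prob (pair_pmf (pois (n * p)) (Y_alt eps n p mu))
           {z. binom_pval (fst z) (snd z) \<le> exp (- ((1 + \<delta>) * L))}"
proof -
  define a l where "a = sqrt (n * p)" and "l = sqrt L"
  define b A where "b = a^2 - w * a * l" and "A = (a + s * l)^2 + w * (a + s * l) * l"
  define X where "X = (w * l + 2)^2"
  have a: "0 < a" "a^2 = n * p" using np by (simp_all add: a_def)
  have l: "1 \<le> l" "l^2 = L" using L by (simp_all add: l_def)
  have l_le: "l \<le> \<kappa> * a"
    using real_sqrt_le_mono[OF L(2)] \<kappa> np by (simp add: a_def l_def real_sqrt_mult)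
  have \<kappa>1: "\<kappa> \<le> 1" using \<kappa> w mult_right_mono[of 1 "w + 3" \<kappa>] by linarith
  have Q: "n * Qplus p mu = (a + s * l)^2"
    using mult_Qplus_eq[of n p mu] np mu s by (simp add: a_def l_def real_sqrt_mult)
  have rect: "{x. real x \<le> b} \<times> {y. A \<le> real y} \<subseteq> {z. binom_pval (fst z) (snd z) \<le> exp (- ((1 + \<delta>) * L))}"
    using binom_pval_le_on_shifted_rectangle[of a l \<kappa> s w \<delta>] a l l_le \<kappa>1 s w \<delta> hoeff
    by (auto simp: b_def A_def)
  have PX: "exp (- (X / (2 * (1 - (w + 2) * \<kappa>)))) / exp 1 \<le> measure_pmf.prob (pois (n * p)) {x. real x \<le> b}"
    using poisson_lower_tail_ge_scaled[of l \<kappa> "n * p" w] l l_le \<kappa> w np a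
    by (simp add: X_def pois_def b_def a_def algebra_simps)
  have "w * l \<le> w * (\<kappa> * a)" using l_le w by simp
  also have "\<dots> \<le> (w + 3) * \<kappa> * a" using \<kappa> a by (simp add: algebra_simps)
  also have "\<dots> \<le> a" using \<kappa> a mult_right_mono[of "(w + 3) * \<kappa>" 1 a] by simp
  finally have "w * l \<le> a + s * l" using s l by (smt (verit) mult_nonneg_nonneg)
  moreover have "1 \<le> a + s * l" using l l_le \<kappa>1 a s mult_right_mono[of \<kappa> 1 a] by (smt (verit) mult_nonneg_nonneg)
  ultimately have PY: "eps / 2 * (exp (- (X / 2)) / (2 * exp 1)) \<le> measure_pmf.prob (Y_alt eps n p mu) {y. A \<le> real y}"
    using Y_alt_upper_tail_ge[OF eps, of n p mu "w * l"] w l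
    by (simp add: X_def A_def Q one_le_power algebra_simps)
  have "eps / 4 * exp (- (X * (1 / (2 * (1 - (w + 2) * \<kappa>)) + 1 / 2) + 2))
      = exp (- (X / (2 * (1 - (w + 2) * \<kappa>)))) / exp 1 * (eps / 2 * (exp (- (X / 2)) / (2 * exp 1)))"
  proof -
    have "- (X * (1 / (2 * (1 - (w + 2) * \<kappa>)) + 1 / 2) + 2) = - (X / (2 * (1 - (w + 2) * \<kappa>))) + - (X / 2) - 1 - 1"
      by (simp add: algebra_simps)
    then show ?thesis by (simp only: exp_add exp_diff) (simp add: field_simps)
  qed
  also have "\<dots> \<le> measure_pmf.prob (pois (n * p)) {x. real x \<le> b} * measure_pmf.prob (Y_alt eps n p mu) {y. A \<le> real y}"
    using PX PY eps by (intro mult_mono) auto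
  also have "\<dots> \<le> measure_pmf.prob (pair_pmf (pois (n * p)) (Y_alt eps n p mu)) {z. binom_pval (fst z) (snd z) \<le> exp (- ((1 + \<delta>) * L))}"
    using rect by (rule measure_pair_pmf_ge_rectangle)
  finally show ?thesis by (simp add: X_def l_def)
qed

section \<open>The min-P test\<close>

lemma measure_Pi_pmf_component:
  assumes "finite I" "i \<in> I"
  shows "measure_pmf.prob (Pi_pmf I d p) {\<omega>. \<omega> i \<in> B} = measure_pmf.prob (p i) B"
proof -
  have "measure_pmf.prob (Pi_pmf I d p) {\<omega>. \<omega> i \<in> B} = measure_pmf.prob (map_pmf (\<lambda>\<omega>. \<omega> i) (Pi_pmf I d p)) B"
    by (simp add: vimage_def)
  also have "map_pmf (\<lambda>\<omega>. \<omega> i) (Pi_pmf I d p) = p i" using assms by (simp add: Pi_pmf_component)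
  finally show ?thesis .
qed

lemma H0_min_pval_le:
  assumes N: "1 \<le> N" and pos: "\<And>i. i < N \<Longrightarrow> 0 < n * P i" and t: "0 \<le> t"
  shows "measure_pmf.prob (H0_law N n P) {\<omega>. min_pval N \<omega> \<le> t} \<le> real N * t"
proof -
  define A where "A = (\<lambda>i. {\<omega>::nat \<Rightarrow> nat \<times> nat. \<omega> i \<in> {z. binom_pval (fst z) (snd z) \<le> t}})"
  have "{\<omega>. min_pval N \<omega> \<le> t} \<subseteq> (\<Union>i<N. A i)"
    using N by (auto simp: min_pval_def A_def Min_le_iff lessThan_empty_iff)
  then have "measure_pmf.prob (H0_law N n P) {\<omega>. min_pval N \<omega> \<le> t}
        \<le> measure_pmf.prob (H0_law N n P) (\<Union>i<N. A i)"
    by (intro measure_pmf.finite_measure_mono) auto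
  also have "\<dots> \<le> (\<Sum>i<N. measure_pmf.prob (H0_law N n P) (A i))"
    by (intro measure_pmf.finite_measure_subadditive_finite) auto
  also have "\<dots> \<le> (\<Sum>i<N. t)"
  proof (intro sum_mono)
    fix i assume i: "i \<in> {..<N}"
    show "measure_pmf.prob (H0_law N n P) (A i) \<le> t"
      unfolding H0_law_def A_def measure_Pi_pmf_component[OF finite_lessThan i]
      using pos i t by (simp add: pair_poisson_binom_pval_le)
  qed
  finally show ?thesis by simp
qed

lemma H1_min_pval_gt_le:
  assumes N: "1 \<le> N"
    and q: "\<And>i. i < N \<Longrightarrow> q \<le> measure_pmf.prob
              (pair_pmf (pois (n * P i)) (Y_alt (eps_N \<beta> N) n (P i) (mu_N r n N)))
              {z. binom_pval (fst z) (snd z) \<le> t}"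
  shows "measure_pmf.prob (H1_law \<beta> r N n P) {\<omega>. t < min_pval N \<omega>} \<le> exp (- (real N * q))"
proof -
  define p where "p = (\<lambda>i. pair_pmf (pois (n * P i)) (Y_alt (eps_N \<beta> N) n (P i) (mu_N r n N)))"
  define B where "B = (\<lambda>i::nat. {z::nat \<times> nat. t < binom_pval (fst z) (snd z)})"
  have pB: "measure_pmf.prob (p i) (B i) \<le> 1 - q" if "i < N" for i
  proof -
    have "B i = - {z. binom_pval (fst z) (snd z) \<le> t}" by (auto simp: B_def)
    then have "measure_pmf.prob (p i) (B i) = 1 - measure_pmf.prob (p i) {z. binom_pval (fst z) (snd z) \<le> t}"
      using measure_pmf.prob_compl[of "{z. binom_pval (fst z) (snd z) \<le> t}" "p i"]
      by (simp add: Compl_eq_Diff_UNIV)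
    then show ?thesis using q[OF that] by (simp add: p_def)
  qed
  have "{\<omega>. t < min_pval N \<omega>} \<subseteq> Pi {..<N} B"
    using N by (auto simp: min_pval_def B_def Min_gr_iff lessThan_empty_iff)
  then have "measure_pmf.prob (H1_law \<beta> r N n P) {\<omega>. t < min_pval N \<omega>}
        \<le> measure_pmf.prob (H1_law \<beta> r N n P) (Pi {..<N} B)"
    by (intro measure_pmf.finite_measure_mono) auto
  also have "\<dots> = (\<Prod>i<N. measure_pmf.prob (p i) (B i))"
    unfolding H1_law_def p_def by (rule measure_Pi_pmf_Pi) auto
  also have "\<dots> \<le> (\<Prod>i<N. 1 - q)"
    using pB by (intro prod_mono) auto
  also have "\<dots> \<le> exp (- q) ^ N"
  proof -
    have "0 \<le> 1 - q" using pB[of 0] N by (meson measure_nonneg order_trans less_le_trans zero_less_one)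
    then show ?thesis using exp_ge_add_one_self[of "- q"] by (simp add: power_mono)
  qed
  also have "\<dots> = exp (- (real N * q))" by (simp add: exp_of_nat_mult[symmetric])
  finally show ?thesis .
qed

lemma real_mul_eps_N:
  assumes "0 < N"
  shows "real N * (eps_N \<beta> N / 4 * exp (- E)) = exp ((1 - \<beta>) * ln (real N) - (E + ln 4))"
proof -
  have "exp ((1 - \<beta>) * ln (real N) - (E + ln 4))
      = exp (ln (real N)) * exp (- \<beta> * ln (real N)) / exp (ln 4) * exp (- E)"
    by (simp only: exp_add[symmetric] exp_diff[symmetric]) (simp add: algebra_simps)
  then show ?thesis using assms by (simp add: eps_N_def powr_def)
qed

lemma min_pval_test_error_le:
  fixes N :: nat and \<beta> r n \<kappa> w \<delta> \<theta> :: real and P :: "nat \<Rightarrow> real"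
  defines "L \<equiv> ln (real N)" and "s \<equiv> sqrt (r / 2)"
  assumes L: "1 \<le> L" and \<beta>: "0 \<le> \<beta>" and r: "0 \<le> r" and n: "0 < n" and P: "\<And>i. i < N \<Longrightarrow> 0 < P i"
    and \<kappa>: "0 \<le> \<kappa>" "(w + 3) * \<kappa> \<le> 1/2" "\<And>i. i < N \<Longrightarrow> L \<le> \<kappa>^2 * (n * P i)"
    and w: "0 < w" and \<delta>: "0 \<le> \<delta>" "1 + \<delta> \<le> s + w"
    and hoeff: "(1 + \<delta>) * L + ln 2 \<le> L * (1 + \<delta>)^2 / (1 + \<kappa> * (s + s^2 + w * s))"
    and margin: "\<theta> * L \<le> (1 - \<beta>) * L
                   - ((w * sqrt L + 2)^2 * (1 / (2 * (1 - (w + 2) * \<kappa>)) + 1 / 2) + (2 + ln 4))"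
  shows "measure_pmf.prob (H0_law N n P) {\<omega>. min_pval N \<omega> \<le> exp (- ((1 + \<delta>) * L))}
       + measure_pmf.prob (H1_law \<beta> r N n P) {\<omega>. min_pval N \<omega> > exp (- ((1 + \<delta>) * L))}
       \<le> exp (- (\<delta> * L)) + exp (- exp (\<theta> * L))"
proof -
  define t where "t = exp (- ((1 + \<delta>) * L))"
  define E where "E = (w * sqrt L + 2)^2 * (1 / (2 * (1 - (w + 2) * \<kappa>)) + 1 / 2) + 2"
  define q where "q = eps_N \<beta> N / 4 * exp (- E)"
  have "N \<noteq> 0" using L by (intro notI) (simp add: L_def)
  then have N: "0 < real N" "1 \<le> N" by simp_all
  have "real N * t = exp L * exp (- ((1 + \<delta>) * L))" using N by (simp add: t_def L_def)
  also have "\<dots> = exp (- (\<delta> * L))" by (simp add: exp_add[symmetric] algebra_simps)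
  finally have H0: "measure_pmf.prob (H0_law N n P) {\<omega>. min_pval N \<omega> \<le> t} \<le> exp (- (\<delta> * L))"
    using H0_min_pval_le[of N n P t] n P N by (simp add: t_def)
  have "1 \<le> real N powr \<beta>" using N \<beta> by (intro ge_one_powr_ge_zero) auto
  then have eps: "0 \<le> eps_N \<beta> N" "eps_N \<beta> N \<le> 1" by (simp_all add: eps_N_def powr_minus inverse_le_1_iff)
  have "q \<le> measure_pmf.prob (pair_pmf (pois (n * P i)) (Y_alt (eps_N \<beta> N) n (P i) (mu_N r n N)))
              {z. binom_pval (fst z) (snd z) \<le> t}" if "i < N" for i
    unfolding q_def t_def E_def
    using L \<kappa>(1,2) \<kappa>(3)[OF that] w \<delta> hoeff eps n P[OF that] r
    by (intro alt_pair_binom_pval_prob_ge) (auto simp: s_def mu_N_def L_def)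
  then have "measure_pmf.prob (H1_law \<beta> r N n P) {\<omega>. t < min_pval N \<omega>} \<le> exp (- (real N * q))"
    using N by (intro H1_min_pval_gt_le) auto
  also have "\<dots> \<le> exp (- exp (\<theta> * L))"
  proof -
    have "real N * q = exp ((1 - \<beta>) * L - (E + ln 4))"
      using N unfolding q_def L_def by (intro real_mul_eps_N) simp
    then show ?thesis using margin by (simp add: E_def algebra_simps)
  qed
  finally show ?thesis using H0 by (simp add: t_def)
qed

lemma detection_constants:
  fixes \<beta> r :: real
  assumes "\<beta> < 1" "2 * (1 - sqrt (1 - \<beta>))^2 < r"
  shows "\<exists>\<delta> w. 0 < \<delta> \<and> 0 < w \<and> 1 + \<delta> \<le> sqrt (r / 2) + w \<and> w^2 < 1 - \<beta>"
proof -
  define s b where "s = sqrt (r / 2)" and "b = sqrt (1 - \<beta>)"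
  have b: "0 < b" "b^2 = 1 - \<beta>" using assms(1) by (simp_all add: b_def)
  have "(1 - b)^2 < r / 2" using assms(2) by (simp add: b_def)
  then have "sqrt ((1 - b)^2) < s" unfolding s_def by (rule real_sqrt_less_mono)
  then have gap: "1 - b < s" by (metis abs_ge_self real_sqrt_abs order_le_less_trans)
  define \<delta> w where "\<delta> = (s + b - 1) / 4" and "w = max (1 + \<delta> - s) (b / 2)"
  have "1 + \<delta> - s < b" using gap by (simp add: \<delta>_def field_simps)
  then have "0 < w" "w < b" using b by (auto simp: w_def)
  then have "w^2 < 1 - \<beta>" using b by (metis power_strict_mono less_imp_le zero_less_numeral)
  moreover have "0 < \<delta>" "1 + \<delta> \<le> s + w" using gap by (auto simp: \<delta>_def w_def)
  ultimately show ?thesis using \<open>0 < w\<close> unfolding s_def by blast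
qed

lemma eventually_hoeffding_margin:
  fixes L \<kappa> :: "'a \<Rightarrow> real"
  assumes L: "filterlim L at_top F" and \<kappa>: "(\<kappa> \<longlongrightarrow> 0) F" and \<delta>: "0 < \<delta>"
  shows "eventually (\<lambda>x. (1 + \<delta>) * L x + ln 2 \<le> L x * (1 + \<delta>)^2 / (1 + \<kappa> x * c)) F"
proof -
  have "((\<lambda>x. (1 + \<delta>)^2 / (1 + \<kappa> x * c) - (1 + \<delta>) - ln 2 / L x)
      \<longlongrightarrow> (1 + \<delta>)^2 / (1 + 0 * c) - (1 + \<delta>) - 0) F"
    by (intro tendsto_intros \<kappa> tendsto_divide_0[OF tendsto_const] filterlim_at_top_imp_at_infinity[OF L]) simp
  moreover have "0 < (1 + \<delta>)^2 / (1 + 0 * c) - (1 + \<delta>) - 0" using \<delta> by (simp add: power2_eq_square algebra_simps add_pos_pos)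
  ultimately have "eventually (\<lambda>x. 0 < (1 + \<delta>)^2 / (1 + \<kappa> x * c) - (1 + \<delta>) - ln 2 / L x) F"
    by (rule order_tendstoD)
  moreover have "eventually (\<lambda>x. 0 < L x) F" using L by (simp add: filterlim_at_top_dense)
  ultimately show ?thesis
  proof eventually_elim
    case (elim x)
    then have "0 \<le> L x * ((1 + \<delta>)^2 / (1 + \<kappa> x * c) - (1 + \<delta>) - ln 2 / L x)" by simp
    then show ?case using elim by (simp add: algebra_simps)
  qed
qed

lemma eventually_exponent_margin:
  fixes L \<kappa> :: "'a \<Rightarrow> real"
  assumes L: "filterlim L at_top F" and \<kappa>: "(\<kappa> \<longlongrightarrow> 0) F" and \<theta>: "\<theta> < \<gamma> - w^2"
  shows "eventually (\<lambda>x. \<theta> * L x \<le> \<gamma> * L x - ((w * sqrt (L x) + 2)^2 * (1 / (2 * (1 - c * \<kappa> x)) + 1 / 2) + C)) F"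
proof -
  have inf: "filterlim L at_infinity F" "filterlim (\<lambda>x. sqrt (L x)) at_infinity F"
    using L by (auto intro: filterlim_at_top_imp_at_infinity filterlim_compose[OF sqrt_at_top])
  have "((\<lambda>x. \<gamma> - (w + 2 / sqrt (L x))^2 * (1 / (2 * (1 - c * \<kappa> x)) + 1 / 2) - C / L x)
      \<longlongrightarrow> \<gamma> - (w + 0)^2 * (1 / (2 * (1 - c * 0)) + 1 / 2) - 0) F"
    by (intro tendsto_intros \<kappa> tendsto_divide_0[OF tendsto_const] inf) simp
  moreover have "\<theta> < \<gamma> - (w + 0)^2 * (1 / (2 * (1 - c * 0)) + 1 / 2) - 0" using \<theta> by simp
  ultimately have "eventually (\<lambda>x. \<theta> < \<gamma> - (w + 2 / sqrt (L x))^2 * (1 / (2 * (1 - c * \<kappa> x)) + 1 / 2) - C / L x) F"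
    by (rule order_tendstoD)
  moreover have "eventually (\<lambda>x. 0 < L x) F" using L by (simp add: filterlim_at_top_dense)
  ultimately show ?thesis
  proof eventually_elim
    case (elim x)
    have "(w + 2 / sqrt (L x))^2 * L x = (w * sqrt (L x) + 2)^2"
      using elim(2) by (simp add: power2_eq_square field_simps)
    then have "L x * (\<gamma> - (w + 2 / sqrt (L x))^2 * (1 / (2 * (1 - c * \<kappa> x)) + 1 / 2) - C / L x)
        = \<gamma> * L x - ((w * sqrt (L x) + 2)^2 * (1 / (2 * (1 - c * \<kappa> x)) + 1 / 2) + C)"
      using elim(2) by (simp add: algebra_simps)
    moreover have "\<theta> * L x \<le> L x * (\<gamma> - (w + 2 / sqrt (L x))^2 * (1 / (2 * (1 - c * \<kappa> x)) + 1 / 2) - C / L x)"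
      using elim by (simp add: mult.commute mult_left_mono less_imp_le)
    ultimately show ?case by simp
  qed
qed

lemma eventually_min_pval_test_error_le:
  fixes \<beta> r \<delta> w \<theta> :: real and n :: "nat \<Rightarrow> real" and P :: "nat \<Rightarrow> nat \<Rightarrow> real"
  assumes \<beta>: "0 \<le> \<beta>" and r: "0 \<le> r"
    and P: "\<And>N i. 1 \<le> N \<Longrightarrow> i < N \<Longrightarrow> 0 < P N i" and n: "\<And>N. 0 < n N"
    and high_counts: "filterlim (\<lambda>N. Min ((\<lambda>i. n N * P N i / ln (real N)) ` {..<N})) at_top sequentially"
    and \<delta>: "0 < \<delta>" "1 + \<delta> \<le> sqrt (r / 2) + w" and w: "0 < w" and \<theta>: "\<theta> < 1 - \<beta> - w^2"
  shows "eventually (\<lambda>N.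
      measure_pmf.prob (H0_law N (n N) (P N)) {\<omega>. min_pval N \<omega> \<le> exp (- ((1 + \<delta>) * ln N))}
    + measure_pmf.prob (H1_law \<beta> r N (n N) (P N)) {\<omega>. min_pval N \<omega> > exp (- ((1 + \<delta>) * ln N))}
    \<le> exp (- (\<delta> * ln N)) + exp (- exp (\<theta> * ln N))) sequentially"
proof -
  define s where "s = sqrt (r / 2)"
  define \<rho> where "\<rho> = (\<lambda>N. Min ((\<lambda>i. n N * P N i / ln (real N)) ` {..<N}))"
  define \<kappa> where "\<kappa> = (\<lambda>N. inverse (sqrt (\<rho> N)))"
  have L: "filterlim (\<lambda>N. ln (real N)) at_top sequentially" by real_asymp
  have \<rho>: "filterlim \<rho> at_top sequentially" using high_counts by (simp add: \<rho>_def)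
  have \<kappa>: "\<kappa> \<longlonglongrightarrow> 0" unfolding \<kappa>_def by (intro tendsto_inverse_0_at_top filterlim_compose[OF sqrt_at_top \<rho>])
  have \<kappa>_small: "eventually (\<lambda>N. \<kappa> N < 1 / (2 * (w + 3))) sequentially"
    using w by (intro order_tendstoD(2)[OF \<kappa>]) simp
  show ?thesis
    using eventually_ge_at_top[of 1] L[unfolded filterlim_at_top, THEN spec, of 1]
      \<rho>[unfolded filterlim_at_top_dense, THEN spec, of 0] \<kappa>_small
      eventually_hoeffding_margin[OF L \<kappa> \<delta>(1), of "s + s^2 + w * s"]
      eventually_exponent_margin[OF L \<kappa> \<theta>, of "w + 2" "2 + ln 4"]
  proof eventually_elim
    case (elim N)
    have "0 \<le> \<kappa> N" "(w + 3) * \<kappa> N \<le> 1/2" using elim w by (simp_all add: \<kappa>_def field_simps)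
    moreover have "ln N \<le> \<kappa> N^2 * (n N * P N i)" if "i < N" for i
    proof -
      have "\<rho> N \<le> n N * P N i / ln N" unfolding \<rho>_def using that by (intro Min_le) auto
      then have "\<rho> N * ln N \<le> n N * P N i" using elim(2) by (simp add: pos_le_divide_eq)
      moreover have "\<kappa> N^2 = inverse (\<rho> N)" using elim(3) by (simp add: \<kappa>_def power_inverse)
      ultimately show ?thesis using elim(3) by (simp add: inverse_eq_divide pos_le_divide_eq mult.commute)
    qed
    ultimately show ?case
      using \<beta> r n P[OF elim(1)] w \<delta> elim(2,5,6) by (intro min_pval_test_error_le) (simp_all add: s_def)
  qed
qed

theorem theorem4:
  fixes \<beta> r :: real and n :: "nat \<Rightarrow> real" and P :: "nat \<Rightarrow> nat \<Rightarrow> real"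
  assumes beta: "1/2 < \<beta>" "\<beta> < 1"
    and r_pos: "0 < r"
    and P_pos: "\<And>N i. 1 \<le> N \<Longrightarrow> i < N \<Longrightarrow> 0 < P N i"
    and P_sum: "\<And>N. 1 \<le> N \<Longrightarrow> (\<Sum>i<N. P N i) = 1"
    and n_pos: "\<And>N. 0 < n N"
    and n_lim: "filterlim n at_top sequentially"
    and high_counts: "filterlim (\<lambda>N. Min ((\<lambda>i. n N * P N i / ln (real N)) ` {..<N})) at_top sequentially"
    and r_above: "r > 2 * (1 - sqrt (1 - \<beta>))\<^sup>2"
  shows "\<exists>t :: nat \<Rightarrow> real.
    (\<lambda>N. measure_pmf.prob (H0_law N (n N) (P N)) {\<omega>. min_pval N \<omega> \<le> t N}
       + measure_pmf.prob (H1_law \<beta> r N (n N) (P N)) {\<omega>. min_pval N \<omega> > t N})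
    \<longlonglongrightarrow> 0"
proof -
  obtain \<delta> w where \<delta>: "0 < \<delta>" and w: "0 < w" and sw: "1 + \<delta> \<le> sqrt (r / 2) + w" and w2: "w^2 < 1 - \<beta>"
    using detection_constants[OF beta(2) r_above] by blast
  define \<theta> where "\<theta> = (1 - \<beta> - w^2) / 2"
  have "\<theta> < 1 - \<beta> - w^2" "0 < \<theta>" using w2 by (simp_all add: \<theta>_def)
  with \<delta> w sw have bound: "eventually (\<lambda>N.
      measure_pmf.prob (H0_law N (n N) (P N)) {\<omega>. min_pval N \<omega> \<le> exp (- ((1 + \<delta>) * ln N))}
    + measure_pmf.prob (H1_law \<beta> r N (n N) (P N)) {\<omega>. min_pval N \<omega> > exp (- ((1 + \<delta>) * ln N))}
    \<le> exp (- (\<delta> * ln N)) + exp (- exp (\<theta> * ln N))) sequentially"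
    using beta r_pos P_pos n_pos high_counts by (intro eventually_min_pval_test_error_le) auto
  have lim: "(\<lambda>N. exp (- (\<delta> * ln (real N))) + exp (- exp (\<theta> * ln (real N)))) \<longlonglongrightarrow> 0"
    using \<delta> \<open>0 < \<theta>\<close> by real_asymp
  have "(\<lambda>N. measure_pmf.prob (H0_law N (n N) (P N)) {\<omega>. min_pval N \<omega> \<le> exp (- ((1 + \<delta>) * ln N))}
    + measure_pmf.prob (H1_law \<beta> r N (n N) (P N)) {\<omega>. min_pval N \<omega> > exp (- ((1 + \<delta>) * ln N))}) \<longlonglongrightarrow> 0"
    by (rule tendsto_sandwich[OF _ bound tendsto_const lim]) simp
  then show ?thesis by (rule exI[where x = "\<lambda>N. exp (- ((1 + \<delta>) * ln (real N)))"])
qed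

end
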